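(* Let $X$ be a real vector space and let $\{x_i\}_{i\in I}$ be an algebraic (Hamel) basis of $X$. Then $0\notin cl_c(\{x_i\}_{i\in I})$.
   Context: For $A\subseteq X$, $cor(A):=\{x\in A:\ \forall x'\in X\ \exists \lambda'>0 \text{ with } x+\lambda x'\in A\ \forall\lambda\in[0,\lambda']\}$. The core convex topology $\tau_c$ on $X$ is the topology whose open sets are the unions of families of convex sets $B\subseteq X$ with $cor(B)=B$; $cl_c$ denotes closure in $\tau_c$. *)

theory Defs
  imports "HOL-Analysis.Analysis"
begin

definition cor :: "'a::real_vector set \<Rightarrow> 'a set" where
  "cor A = {x \<in> A. \<forall>x'. \<exists>l'>0. \<forall>l\<in>{0..l'}. x + l *\<^sub>R x' \<in> A}"

definition core_convex_topology :: "'a::real_vector topology" where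
  "core_convex_topology =
     topology (\<lambda>U. \<exists>F. (\<forall>B\<in>F. convex B \<and> cor B = B) \<and> U = \<Union>F)"

definition cl_c :: "'a::real_vector set \<Rightarrow> 'a set" where
  "cl_c A = core_convex_topology closure_of A"

end

theory Submission
  imports Defs
begin

text \<open>The \<open>\<ell>\<^sup>1\<close>-norm of the coordinates with respect to the basis is a norm on \<open>X\<close> whose
  open unit ball is convex and algebraically open, hence open in the core convex topology.
  It contains \<open>0\<close>, while every basis vector has norm exactly \<open>1\<close>.\<close>

lemma cor_subset: "cor A \<subseteq> A"
  unfolding cor_def by auto

lemma cor_Int: "cor (A \<inter> C) = cor A \<inter> cor C"
proof
  show "cor (A \<inter> C) \<subseteq> cor A \<inter> cor C"
    unfolding cor_def by blast
  show "cor A \<inter> cor C \<subseteq> cor (A \<inter> C)"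
  proof
    fix x assume x: "x \<in> cor A \<inter> cor C"
    have "\<exists>l'>0. \<forall>l\<in>{0..l'}. x + l *\<^sub>R x' \<in> A \<inter> C" for x'
    proof -
      obtain l1 where "l1 > 0" "\<forall>l\<in>{0..l1}. x + l *\<^sub>R x' \<in> A"
        using x unfolding cor_def by blast
      moreover obtain l2 where "l2 > 0" "\<forall>l\<in>{0..l2}. x + l *\<^sub>R x' \<in> C"
        using x unfolding cor_def by blast
      ultimately show ?thesis
        by (intro exI[of _ "min l1 l2"]) auto
    qed
    then show "x \<in> cor (A \<inter> C)"
      using x cor_subset unfolding cor_def by blast
  qed
qed

lemma istopology_core_convex:
  "istopology (\<lambda>U::'a::real_vector set. \<exists>F. (\<forall>B\<in>F. convex B \<and> cor B = B) \<and> U = \<Union>F)"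
  (is "istopology ?open")
  unfolding istopology_def
proof (intro conjI allI impI)
  fix S T assume "?open S" "?open T"
  then obtain F G where F: "\<forall>B\<in>F. convex B \<and> cor B = B" "S = \<Union>F"
    and G: "\<forall>B\<in>G. convex B \<and> cor B = B" "T = \<Union>G" by blast
  let ?H = "{A \<inter> C | A C. A \<in> F \<and> C \<in> G}"
  have "\<forall>D\<in>?H. convex D \<and> cor D = D"
    using F(1) G(1) by (auto simp: cor_Int convex_Int)
  moreover have "S \<inter> T = \<Union>?H"
    unfolding F(2) G(2) by blast
  ultimately show "?open (S \<inter> T)" by blast
next
  fix K assume "\<forall>U\<in>K. ?open U"
  then obtain f where f_open: "\<And>U B. U \<in> K \<Longrightarrow> B \<in> f U \<Longrightarrow> convex B \<and> cor B = B"
    and f_Union: "\<And>U. U \<in> K \<Longrightarrow> \<Union>(f U) = U"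
    by metis
  have "\<Union>(\<Union>(f ` K)) = (\<Union>U\<in>K. \<Union>(f U))"
    by blast
  also have "\<dots> = \<Union>K"
    by (simp add: f_Union)
  finally show "?open (\<Union>K)"
    using f_open by (intro exI[of _ "\<Union>(f ` K)"]) auto
qed

lemma openin_core_convex_topologyI:
  assumes "convex U" and "cor U = U"
  shows "openin core_convex_topology U"
  unfolding core_convex_topology_def topology_inverse'[OF istopology_core_convex]
  using assms by (intro exI[of _ "{U}"]) auto

lemma
  fixes p :: "'a::real_vector \<Rightarrow> real"
  assumes nonneg: "\<And>x. p x \<ge> 0"
    and comb: "\<And>a c x y. p (a *\<^sub>R x + c *\<^sub>R y) \<le> \<bar>a\<bar> * p x + \<bar>c\<bar> * p y"
  shows convex_seminorm_ball: "convex {x. p x < 1}"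
    and cor_seminorm_ball: "cor {x. p x < 1} = {x. p x < 1}"
proof -
  show "convex {x. p x < 1}"
  proof (rule convexI, unfold mem_Collect_eq)
    fix x y :: 'a and u v :: real
    assume h: "p x < 1" "p y < 1" "0 \<le> u" "0 \<le> v" "u + v = 1"
    have "p (u *\<^sub>R x + v *\<^sub>R y) \<le> u * p x + v * p y"
      using comb[of u x v y] h by simp
    also have "\<dots> < u + v"
    proof (cases "u = 0")
      case True
      then show ?thesis using h by simp
    next
      case False
      then have "u * p x < u"
        using h by simp
      moreover have "v * p y \<le> v"
        using h by (simp add: mult_left_le)
      ultimately show ?thesis by linarith
    qed
    finally show "p (u *\<^sub>R x + v *\<^sub>R y) < 1"
      using h by simp
  qed
  show "cor {x. p x < 1} = {x. p x < 1}"
  proof (rule antisym[OF cor_subset], rule subsetI)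
    fix x assume x: "x \<in> {x. p x < 1}"
    have "\<exists>l'>0. \<forall>l\<in>{0..l'}. x + l *\<^sub>R x' \<in> {x. p x < 1}" for x'
    proof -
      define l' where "l' = (1 - p x) / (p x' + 1)"
      have pos: "p x' + 1 > 0"
        using nonneg[of x'] by simp
      have "l' > 0"
        using x pos unfolding l'_def by simp
      moreover have "p (x + l *\<^sub>R x') < 1" if l: "l \<in> {0..l'}" for l
      proof -
        have "p (1 *\<^sub>R x + l *\<^sub>R x') \<le> p x + l * p x'"
          using comb[of 1 x l x'] l by simp
        also have "\<dots> \<le> p x + l' * p x'"
          using l nonneg[of x'] by (simp add: mult_right_mono)
        also have "\<dots> < p x + l' * (p x' + 1)"
          using \<open>l' > 0\<close> by simp
        also have "\<dots> = 1"
          using pos unfolding l'_def by simp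
        finally show ?thesis by simp
      qed
      ultimately show ?thesis by auto
    qed
    then show "x \<in> cor {x. p x < 1}"
      using x unfolding cor_def by auto
  qed
qed

definition coord_norm :: "'a::real_vector set \<Rightarrow> 'a \<Rightarrow> real" where
  "coord_norm B x = (\<Sum>b\<in>{b. representation B x b \<noteq> 0}. \<bar>representation B x b\<bar>)"

lemma coord_norm_eq_sum:
  assumes "finite S" and "{b. representation B x b \<noteq> 0} \<subseteq> S"
  shows "coord_norm B x = (\<Sum>b\<in>S. \<bar>representation B x b\<bar>)"
  unfolding coord_norm_def using assms by (intro sum.mono_neutral_left) auto

lemma coord_norm_nonneg: "coord_norm B x \<ge> 0"
  unfolding coord_norm_def by (rule sum_nonneg) auto

lemma coord_norm_zero [simp]: "coord_norm B 0 = 0"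
  by (simp add: coord_norm_def representation_zero)

lemma coord_norm_basis:
  assumes "independent B" and "b \<in> B"
  shows "coord_norm B b = 1"
proof -
  have "{v. representation B b v \<noteq> 0} = {b}"
    using representation_basis[OF assms] by auto
  then show ?thesis
    unfolding coord_norm_def using representation_basis[OF assms] by simp
qed

lemma coord_norm_comb:
  fixes B :: "'a::real_vector set"
  assumes "independent B" and "span B = UNIV"
  shows "coord_norm B (a *\<^sub>R x + c *\<^sub>R y) \<le> \<bar>a\<bar> * coord_norm B x + \<bar>c\<bar> * coord_norm B y"
proof -
  let ?r = "representation B"
  define S where "S = {b. ?r x b \<noteq> 0} \<union> {b. ?r y b \<noteq> 0}"
  have S: "finite S"
    unfolding S_def by (simp add: finite_representation)
  have r: "?r (a *\<^sub>R x + c *\<^sub>R y) = (\<lambda>b. a * ?r x b + c * ?r y b)"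
    using assms by (simp add: representation_add representation_scale)
  have "{b. ?r (a *\<^sub>R x + c *\<^sub>R y) b \<noteq> 0} \<subseteq> S"
    unfolding r S_def by auto
  from coord_norm_eq_sum[OF S this]
  have "coord_norm B (a *\<^sub>R x + c *\<^sub>R y) = (\<Sum>b\<in>S. \<bar>a * ?r x b + c * ?r y b\<bar>)"
    unfolding r .
  also have "\<dots> \<le> (\<Sum>b\<in>S. \<bar>a\<bar> * \<bar>?r x b\<bar> + \<bar>c\<bar> * \<bar>?r y b\<bar>)"
    by (intro sum_mono) (simp add: abs_mult[symmetric] abs_triangle_ineq)
  also have "\<dots> = \<bar>a\<bar> * coord_norm B x + \<bar>c\<bar> * coord_norm B y"
    using coord_norm_eq_sum[OF S, of B x] coord_norm_eq_sum[OF S, of B y]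
    by (simp add: sum.distrib sum_distrib_left S_def)
  finally show ?thesis .
qed

theorem lemma3p14:
  fixes B :: "'a::real_vector set"
  assumes "independent B" and "span B = UNIV"
  shows "0 \<notin> cl_c B"
proof -
  define U where "U = {x. coord_norm B x < 1}"
  note seminorm = coord_norm_nonneg coord_norm_comb[OF assms]
  have "openin core_convex_topology U"
    unfolding U_def
    using convex_seminorm_ball[OF seminorm] cor_seminorm_ball[OF seminorm]
    by (rule openin_core_convex_topologyI)
  moreover have "0 \<in> U"
    unfolding U_def by simp
  moreover have "U \<inter> B = {}"
    unfolding U_def using coord_norm_basis[OF assms(1)] by auto
  ultimately show ?thesis
    unfolding cl_c_def in_closure_of by auto
qed

end
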